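(* Let $\{\varphi_n\}_{n\ge1}$ be an orthonormal system on $[0,1]$ and let $\{d_n\}$ be a sequence of real numbers with $d_n=O\!\left(\frac{\sqrt{n}}{\log^2(n+1)}\right)$. For $a=\{a_n\}\in\ell_2$ put $Q_n(d,a,x)=\sum_{k=1}^{n} d_k a_k \log k\,\varphi_k(x)$ and $B_n(d,a)=\max_{1\le i<n}\left|\int_0^{i/n}Q_n(d,a,x)\,dx\right|$. Suppose that for every $a\in\ell_2$, $B_n(d,a)=O(1)$ as $n\to\infty$. Then for every $f\in BV$ the series $$\sum_{k=1}^{\infty} d_k\, C_k(f)\,\varphi_k(x)$$ converges almost everywhere on $[0,1]$, where $C_k(f)=\int_0^1 f(x)\varphi_k(x)\,dx$.
   Context: $BV$ denotes the class of (finite-valued) functions of bounded variation on $[0,1]$. An orthonormal system on $[0,1]$ is a sequence of functions orthonormal in $L_2(0,1)$. $\log$ denotes the logarithm (so $\log 1=0$). *)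

theory Defs
  imports "HOL-Analysis.Analysis"
begin

definition BV01 :: "(real \<Rightarrow> real) \<Rightarrow> bool" where
  "BV01 f \<longleftrightarrow> (\<exists>M. \<forall>(t::nat \<Rightarrow> real) m. t 0 = 0 \<and> t m = 1 \<and> (\<forall>i<m. t i \<le> t (Suc i))
      \<longrightarrow> (\<Sum>i<m. \<bar>f (t (Suc i)) - f (t i)\<bar>) \<le> M)"

definition orthonormal_system :: "(nat \<Rightarrow> real \<Rightarrow> real) \<Rightarrow> bool" where
  "orthonormal_system \<phi> \<longleftrightarrow>
     (\<forall>n\<ge>1. \<phi> n \<in> borel_measurable lborel \<and>
             set_integrable lborel {0..1} (\<lambda>x. (\<phi> n x)\<^sup>2)) \<and>
     (\<forall>n\<ge>1. \<forall>m\<ge>1. (LBINT x:{0..1}. \<phi> n x * \<phi> m x) = (if n = m then 1 else 0))"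

definition coef :: "(nat \<Rightarrow> real \<Rightarrow> real) \<Rightarrow> (real \<Rightarrow> real) \<Rightarrow> nat \<Rightarrow> real" where
  "coef \<phi> f k = (LBINT x:{0..1}. f x * \<phi> k x)"

definition Qn :: "(nat \<Rightarrow> real \<Rightarrow> real) \<Rightarrow> nat \<Rightarrow> (nat \<Rightarrow> real) \<Rightarrow> (nat \<Rightarrow> real) \<Rightarrow> real \<Rightarrow> real" where
  "Qn \<phi> n d a x = (\<Sum>k=1..n. d k * a k * ln (real k) * \<phi> k x)"

definition Bn :: "(nat \<Rightarrow> real \<Rightarrow> real) \<Rightarrow> nat \<Rightarrow> (nat \<Rightarrow> real) \<Rightarrow> (nat \<Rightarrow> real) \<Rightarrow> real" where
  "Bn \<phi> n d a = Max ((\<lambda>i. \<bar>LBINT x:{0..real i / real n}. Qn \<phi> n d a x\<bar>) ` {1..<n})"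

end

theory Submission
  imports Defs
begin

(*
  Put b k = d k * ln k * C_k(f).  For a in l_2 the pairing sum_(k<=n) a_k b_k equals
  the integral of f * Q_n(d,a) over [0,1].  Summation by parts along the grid i/n bounds it
  by (|f 1| + Var f) * (B_n(d,a) + (1 + |Q_n|^2 / n) / 2): the partial integrals of Q_n at
  the grid points are at most B_n, the oscillation of f on a cell is controlled by its
  variation, and on a cell of length 1/n the integral of |Q_n| is at most
  (1 + |Q_n|^2 / n) / 2 by AM-GM.  The growth condition on d gives
  |Q_n|^2 = sum_(k<=n) (d_k a_k ln k)^2 <= K n |a|^2, so every pairing with an l_2 sequence
  is bounded, and Landau's theorem yields b in l_2.  That is
  sum_k (d_k C_k(f))^2 ln^2 k < oo, and the Menshov-Rademacher theorem gives convergence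
  almost everywhere.
*)

section \<open>Set integrals on [0,1] and summation by parts\<close>

lemma sum_lessThan_by_parts:
  fixes u G :: "nat \<Rightarrow> 'a::comm_ring"
  shows "(\<Sum>i<n. u (Suc i) * (G (Suc i) - G i))
    = u n * G n - u 0 * G 0 - (\<Sum>i<n. G i * (u (Suc i) - u i))"
  by (induction n) (simp_all add: algebra_simps)

text \<open>In the application \<open>F\<close> and \<open>G\<close> are the integrals of \<open>f h\<close> and \<open>h\<close> over \<open>[0, i/n]\<close>,
  \<open>u\<close> and \<open>v\<close> the values of \<open>f\<close> and of its variation at \<open>i/n\<close>.\<close>

lemma abs_le_by_Abel_summation:
  fixes F G u v :: "nat \<Rightarrow> real"
  assumes "F 0 = 0" "G 0 = 0" "0 < n"
    and F_step: "\<And>i. i < n \<Longrightarrow>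
      \<bar>F (Suc i) - F i - u (Suc i) * (G (Suc i) - G i)\<bar> \<le> (v (Suc i) - v i) * W"
    and u_step: "\<And>i. i < n \<Longrightarrow> \<bar>u (Suc i) - u i\<bar> \<le> v (Suc i) - v i"
    and G_bound: "\<And>i. i < n \<Longrightarrow> \<bar>G i\<bar> \<le> B"
    and G_last: "\<bar>G n - G (n - 1)\<bar> \<le> W"
    and "v n - v 0 \<le> V"
  shows "\<bar>F n\<bar> \<le> (\<bar>u n\<bar> + V) * (B + W)"
proof -
  have "0 \<le> W" using G_last by linarith
  have "0 \<le> B" using G_bound[OF \<open>0 < n\<close>] by linarith
  have var: "(\<Sum>i<n. v (Suc i) - v i) \<le> V"
    using \<open>v n - v 0 \<le> V\<close> by (simp add: sum_lessThan_telescope)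
  define E where "E i = F (Suc i) - F i - u (Suc i) * (G (Suc i) - G i)" for i
  have "F n = (\<Sum>i<n. F (Suc i) - F i)"
    using \<open>F 0 = 0\<close> by (simp add: sum_lessThan_telescope)
  also have "\<dots> = (\<Sum>i<n. u (Suc i) * (G (Suc i) - G i)) + (\<Sum>i<n. E i)"
    by (simp add: E_def sum.distrib[symmetric])
  also have "\<dots> = u n * G n - (\<Sum>i<n. G i * (u (Suc i) - u i)) + (\<Sum>i<n. E i)"
    using \<open>G 0 = 0\<close> by (simp add: sum_lessThan_by_parts)
  finally have F_eq: "F n = u n * G n - (\<Sum>i<n. G i * (u (Suc i) - u i)) + (\<Sum>i<n. E i)" .
  have "\<bar>\<Sum>i<n. E i\<bar> \<le> (\<Sum>i<n. (v (Suc i) - v i) * W)"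
    unfolding E_def using F_step by (intro order_trans[OF sum_abs] sum_mono) auto
  also have "\<dots> \<le> V * W"
    using var \<open>0 \<le> W\<close> by (simp add: sum_distrib_right[symmetric] mult_right_mono)
  finally have E_bound: "\<bar>\<Sum>i<n. E i\<bar> \<le> V * W" .
  have "\<bar>\<Sum>i<n. G i * (u (Suc i) - u i)\<bar> \<le> (\<Sum>i<n. B * (v (Suc i) - v i))"
    using G_bound u_step \<open>0 \<le> B\<close>
    by (intro order_trans[OF sum_abs] sum_mono) (simp add: abs_mult mult_mono')
  also have "\<dots> \<le> B * V"
    using var \<open>0 \<le> B\<close> by (simp add: sum_distrib_left[symmetric] mult_left_mono)
  finally have by_parts_bound: "\<bar>\<Sum>i<n. G i * (u (Suc i) - u i)\<bar> \<le> B * V" .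
  have "\<bar>G n\<bar> \<le> B + W"
    using G_bound[of "n - 1"] G_last \<open>0 < n\<close> by linarith
  then have "\<bar>u n * G n\<bar> \<le> \<bar>u n\<bar> * (B + W)"
    by (simp add: abs_mult mult_left_mono)
  with F_eq E_bound by_parts_bound show ?thesis
    by (simp add: algebra_simps)
qed

lemma set_integral_lborel_singleton:
  fixes g :: "real \<Rightarrow> real"
  shows "(LBINT x:{a}. g x) = 0"
  unfolding set_lebesgue_integral_def
  by (rule integral_eq_zero_AE) (use AE_lborel_singleton[of a] in eventually_elim, simp)

lemma set_integral_Icc_split:
  fixes g :: "real \<Rightarrow> real"
  assumes "set_integrable lborel {0..1} g" "0 \<le> s" "s \<le> t" "t \<le> 1"
  shows "(LBINT x:{0..t}. g x) = (LBINT x:{0..s}. g x) + (LBINT x:{s<..t}. g x)"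
proof -
  have "{0..t} = {0..s} \<union> {s<..t}" using assms by auto
  moreover have "set_integrable lborel {0..s} g" "set_integrable lborel {s<..t} g"
    using assms by (auto intro: set_integrable_subset)
  ultimately show ?thesis
    by (simp add: set_integral_Un ivl_disj_int)
qed

lemma set_integral_abs_le_amgm:
  fixes h :: "real \<Rightarrow> real"
  assumes h: "set_integrable lborel {0..1} h" "set_integrable lborel {0..1} (\<lambda>x. (h x)\<^sup>2)"
    and "0 < c" "0 \<le> s" "s \<le> t" "t \<le> 1"
  shows "(LBINT x:{s<..t}. \<bar>h x\<bar>) \<le> (c * (t - s) + (LBINT x:{0..1}. (h x)\<^sup>2) / c) / 2"
proof -
  have sub: "{s<..t} \<subseteq> {0..1}" using assms by auto
  have const: "set_integrable lborel {s<..t} (\<lambda>_. c)"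
    unfolding set_integrable_def using \<open>s \<le> t\<close>
    by (simp add: integrable_mult_left integrable_real_indicator)
  have square: "set_integrable lborel {s<..t} (\<lambda>x. (h x)\<^sup>2)"
    using set_integrable_subset[OF h(2) _ sub] by simp
  have "(LBINT x:{s<..t}. \<bar>h x\<bar>) \<le> (LBINT x:{s<..t}. (c + (h x)\<^sup>2 / c) / 2)"
  proof (rule set_integral_mono)
    show "set_integrable lborel {s<..t} (\<lambda>x. \<bar>h x\<bar>)"
      using h sub by (intro set_integrable_abs) (auto intro: set_integrable_subset)
    show "set_integrable lborel {s<..t} (\<lambda>x. (c + (h x)\<^sup>2 / c) / 2)"
      using const square by (intro set_integrable_divide set_integral_add)
    show "\<bar>h x\<bar> \<le> (c + (h x)\<^sup>2 / c) / 2" for x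
      using sum_squares_bound[of "sqrt c" "\<bar>h x\<bar> / sqrt c"] \<open>0 < c\<close>
      by (simp add: power_divide field_simps)
  qed
  also have "\<dots> = (c * (t - s) + (LBINT x:{s<..t}. (h x)\<^sup>2) / c) / 2"
    using const square \<open>s \<le> t\<close> by (simp add: set_integral_const)
  also have "(LBINT x:{s<..t}. (h x)\<^sup>2) \<le> (LBINT x:{0..1}. (h x)\<^sup>2)"
    using h(2) square sub unfolding set_lebesgue_integral_def set_integrable_def
    by (intro integral_mono) (auto split: split_indicator)
  finally show ?thesis
    using \<open>0 < c\<close> by (simp add: divide_right_mono)
qed

lemma set_integrable_if_square:
  fixes g :: "real \<Rightarrow> real"
  assumes [measurable]: "g \<in> borel_measurable lborel"
    and "set_integrable lborel {0..1} (\<lambda>x. (g x)\<^sup>2)"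
  shows "set_integrable lborel {0..1} g"
proof (rule set_integrable_bound)
  show "set_integrable lborel {0..1} (\<lambda>x. 1 + (g x)\<^sup>2)"
    using assms(2) by (intro set_integral_add) (auto simp: set_integrable_def)
  show "set_borel_measurable lborel {0..1} g"
    by (simp add: set_borel_measurable_def)
  have "\<bar>y\<bar> \<le> 1 + y\<^sup>2" for y :: real
    using sum_squares_bound[of 1 "\<bar>y\<bar>"] by simp
  then show "AE x in lborel. x \<in> {0..1} \<longrightarrow> norm (g x) \<le> norm (1 + (g x)\<^sup>2)"
    by simp
qed

section \<open>Functions of bounded variation\<close>

definition partition_upto :: "real \<Rightarrow> (nat \<Rightarrow> real) \<Rightarrow> nat \<Rightarrow> bool" where
  "partition_upto x t m \<longleftrightarrow> t 0 = 0 \<and> t m = x \<and> (\<forall>i<m. t i \<le> t (Suc i))"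

definition variation_sum :: "(real \<Rightarrow> real) \<Rightarrow> (nat \<Rightarrow> real) \<Rightarrow> nat \<Rightarrow> real" where
  "variation_sum f t m = (\<Sum>i<m. \<bar>f (t (Suc i)) - f (t i)\<bar>)"

definition variation :: "(real \<Rightarrow> real) \<Rightarrow> real \<Rightarrow> real" where
  "variation f x = Sup {variation_sum f t m | t m. partition_upto x t m}"

lemma partition_upto_extend:
  assumes "partition_upto x t m" "x \<le> y"
  shows "partition_upto y (t(Suc m := y)) (Suc m)"
    and "variation_sum f (t(Suc m := y)) (Suc m) = variation_sum f t m + \<bar>f y - f x\<bar>"
  using assms by (auto simp: partition_upto_def variation_sum_def less_Suc_eq)

context
  fixes f :: "real \<Rightarrow> real"
  assumes f: "BV01 f"
begin

lemma BV01_bdd_above_variation_sums: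
  assumes "x \<le> 1"
  shows "bdd_above {variation_sum f t m | t m. partition_upto x t m}"
proof -
  obtain M where M: "\<And>t m. partition_upto 1 t m \<Longrightarrow> variation_sum f t m \<le> M"
    using f unfolding BV01_def partition_upto_def variation_sum_def by blast
  have "variation_sum f t m \<le> M" if "partition_upto x t m" for t m
    using M[OF partition_upto_extend(1)[OF that assms]] partition_upto_extend(2)[OF that assms]
    by simp
  then show ?thesis by (auto simp: bdd_above_def)
qed

lemma variation_sum_le_variation:
  "x \<le> 1 \<Longrightarrow> partition_upto x t m \<Longrightarrow> variation_sum f t m \<le> variation f x"
  unfolding variation_def by (rule cSup_upper) (use BV01_bdd_above_variation_sums in auto)

lemma variation_nonneg_0: "0 \<le> variation f 0"
  using variation_sum_le_variation[of 0 "\<lambda>_. 0" 0]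
  by (simp add: partition_upto_def variation_sum_def)

lemma variation_add_abs_diff_le:
  assumes "0 \<le> x" "x \<le> y" "y \<le> 1"
  shows "variation f x + \<bar>f y - f x\<bar> \<le> variation f y"
proof -
  have "partition_upto x (\<lambda>i. if i = 0 then 0 else x) 1"
    using assms by (auto simp: partition_upto_def)
  then have "{variation_sum f t m | t m. partition_upto x t m} \<noteq> {}" by blast
  moreover have "variation_sum f t m \<le> variation f y - \<bar>f y - f x\<bar>"
    if "partition_upto x t m" for t m
    using variation_sum_le_variation[OF assms(3) partition_upto_extend(1)[OF that assms(2)]]
      partition_upto_extend(2)[OF that assms(2)] by simp
  ultimately have "variation f x \<le> variation f y - \<bar>f y - f x\<bar>"
    unfolding variation_def[of f x] by (intro cSup_least) auto
  then show ?thesis by simp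
qed

lemma variation_mono: "0 \<le> x \<Longrightarrow> x \<le> y \<Longrightarrow> y \<le> 1 \<Longrightarrow> variation f x \<le> variation f y"
  using variation_add_abs_diff_le[of x y] by linarith

lemma abs_le_variation: "0 \<le> x \<Longrightarrow> x \<le> 1 \<Longrightarrow> \<bar>f x\<bar> \<le> \<bar>f 0\<bar> + variation f 1"
  using variation_add_abs_diff_le[of 0 x] variation_mono[of x 1] variation_nonneg_0 by linarith

lemma BV01_borel_measurable: "(\<lambda>x. indicator {0..1} x * f x) \<in> borel_measurable lborel"
proof -
  have "mono_on {0..1} (variation f)"
    by (auto intro!: mono_onI variation_mono)
  moreover have "mono_on {0..1} (\<lambda>x. variation f x - f x)"
  proof (rule mono_onI)
    fix x y :: real assume "x \<in> {0..1}" "y \<in> {0..1}" "x \<le> y"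
    then show "variation f x - f x \<le> variation f y - f y"
      using variation_add_abs_diff_le[of x y] abs_ge_self[of "f y - f x"] by auto
  qed
  ultimately have "(\<lambda>x. variation f x - (variation f x - f x))
      \<in> borel_measurable (restrict_space borel {0..1})"
    using borel_measurable_mono_on_fnc by measurable
  then have "(\<lambda>x. indicator {0..1} x *\<^sub>R f x) \<in> borel_measurable borel"
    by (subst (asm) borel_measurable_restrict_space_iff) auto
  then show ?thesis by simp
qed

lemma BV01_set_integrable_mult:
  assumes h: "set_integrable lborel {0..1} h"
  shows "set_integrable lborel {0..1} (\<lambda>x. f x * h x)"
proof (rule set_integrable_bound[OF set_integrable_mult_right[OF h]])
  have "(\<lambda>x. (indicator {0..1} x * f x) * (indicator {0..1} x *\<^sub>R h x)) \<in> borel_measurable lborel"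
    using BV01_borel_measurable borel_measurable_integrable[OF h[unfolded set_integrable_def]]
    by measurable
  then show "set_borel_measurable lborel {0..1} (\<lambda>x. f x * h x)"
    unfolding set_borel_measurable_def
    by (rule measurable_cong[THEN iffD1, rotated]) (simp split: split_indicator)
  show "AE x in lborel. x \<in> {0..1} \<longrightarrow> norm (f x * h x) \<le> norm ((\<bar>f 0\<bar> + variation f 1) * h x)"
  proof (intro AE_I2 impI)
    fix x :: real assume "x \<in> {0..1}"
    then have "\<bar>f x\<bar> \<le> \<bar>\<bar>f 0\<bar> + variation f 1\<bar>"
      using abs_le_variation[of x] by auto
    then show "norm (f x * h x) \<le> norm ((\<bar>f 0\<bar> + variation f 1) * h x)"
      by (simp add: abs_mult mult_right_mono)
  qed
qed

lemma abs_set_integral_BV_diff_le: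
  assumes h: "set_integrable lborel {0..1} h" and "0 \<le> s" "s \<le> t" "t \<le> 1"
  shows "\<bar>(LBINT x:{s<..t}. f x * h x) - f t * (LBINT x:{s<..t}. h x)\<bar>
    \<le> (variation f t - variation f s) * (LBINT x:{s<..t}. \<bar>h x\<bar>)"
proof -
  have sub: "{s<..t} \<subseteq> {0..1}" using assms by auto
  have hi: "set_integrable lborel {s<..t} h"
    using set_integrable_subset[OF h _ sub] by simp
  then have fthi: "set_integrable lborel {s<..t} (\<lambda>x. f t * h x)"
    by (rule set_integrable_mult_right)
  have fhi: "set_integrable lborel {s<..t} (\<lambda>x. f x * h x)"
    using set_integrable_subset[OF BV01_set_integrable_mult[OF h] _ sub] by simp
  have "(LBINT x:{s<..t}. f x * h x) - f t * (LBINT x:{s<..t}. h x)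
      = (LBINT x:{s<..t}. f x * h x - f t * h x)"
    using fhi fthi by (simp add: set_integral_diff)
  also have "\<bar>\<dots>\<bar> \<le> (LBINT x:{s<..t}. \<bar>f x * h x - f t * h x\<bar>)"
    using set_integral_norm_bound[of lborel "{s<..t}" "\<lambda>x. f x * h x - f t * h x"] fhi fthi by simp
  also have "\<dots> \<le> (LBINT x:{s<..t}. (variation f t - variation f s) * \<bar>h x\<bar>)"
  proof (rule set_integral_mono)
    show "set_integrable lborel {s<..t} (\<lambda>x. \<bar>f x * h x - f t * h x\<bar>)"
      using fhi fthi by (intro set_integrable_abs set_integral_diff)
    show "set_integrable lborel {s<..t} (\<lambda>x. (variation f t - variation f s) * \<bar>h x\<bar>)"
      using hi by (intro set_integrable_mult_right set_integrable_abs)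
    fix x assume x: "x \<in> {s<..t}"
    have "\<bar>f t - f x\<bar> \<le> variation f t - variation f s"
      using x assms variation_add_abs_diff_le[of x t] variation_mono[of s x] by auto
    then show "\<bar>f x * h x - f t * h x\<bar> \<le> (variation f t - variation f s) * \<bar>h x\<bar>"
      by (simp add: left_diff_distrib[symmetric] abs_mult abs_minus_commute mult_right_mono)
  qed
  also have "\<dots> = (variation f t - variation f s) * (LBINT x:{s<..t}. \<bar>h x\<bar>)"
    by simp
  finally show ?thesis .
qed

theorem abs_set_integral_BV_le:
  fixes h :: "real \<Rightarrow> real" and n :: nat
  assumes h: "set_integrable lborel {0..1} h" "set_integrable lborel {0..1} (\<lambda>x. (h x)\<^sup>2)"
    and "0 < n"
    and partial_integrals: "\<And>i. i < n \<Longrightarrow> \<bar>LBINT x:{0..real i / real n}. h x\<bar> \<le> B"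
  shows "\<bar>LBINT x:{0..1}. f x * h x\<bar>
    \<le> (\<bar>f 1\<bar> + variation f 1) * (B + (1 + (LBINT x:{0..1}. (h x)\<^sup>2) / real n) / 2)"
proof -
  define t where "t i = real i / real n" for i
  define W where "W = (1 + (LBINT x:{0..1}. (h x)\<^sup>2) / real n) / 2"
  have t_0: "t 0 = 0" and t_n: "t n = 1"
    using \<open>0 < n\<close> by (simp_all add: t_def)
  have t_Suc: "t (Suc i) = t i + 1 / real n" for i
    by (simp add: t_def add_divide_distrib)
  have t_bounds: "0 \<le> t i" "t i \<le> t (Suc i)" "t (Suc i) \<le> 1" if "i < n" for i
    using that by (auto simp: t_def divide_le_eq_1 intro: divide_right_mono)
  have fh: "set_integrable lborel {0..1} (\<lambda>x. f x * h x)"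
    by (rule BV01_set_integrable_mult[OF h(1)])
  have increment: "(LBINT x:{0..t (Suc i)}. g x) - (LBINT x:{0..t i}. g x) = (LBINT x:{t i<..t (Suc i)}. g x)"
    if "set_integrable lborel {0..1} g" "i < n" for g :: "real \<Rightarrow> real" and i
    using set_integral_Icc_split[OF that(1) t_bounds[OF that(2)]] by simp
  have abs_h: "(LBINT x:{t i<..t (Suc i)}. \<bar>h x\<bar>) \<le> W" if "i < n" for i
    using set_integral_abs_le_amgm[OF h _ t_bounds[OF that], of "real n"] \<open>0 < n\<close>
    by (simp add: W_def t_Suc)
  have "\<bar>LBINT x:{0..t n}. f x * h x\<bar>
      \<le> (\<bar>f (t n)\<bar> + variation f 1) * (B + W)"
  proof (rule abs_le_by_Abel_summation[where v = "\<lambda>i. variation f (t i)"])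
    show "(LBINT x:{0..t 0}. f x * h x) = 0" "(LBINT x:{0..t 0}. h x) = 0"
      by (simp_all add: t_0 set_integral_lborel_singleton)
    show "\<bar>(LBINT x:{0..t (Suc i)}. f x * h x) - (LBINT x:{0..t i}. f x * h x)
        - f (t (Suc i)) * ((LBINT x:{0..t (Suc i)}. h x) - (LBINT x:{0..t i}. h x))\<bar>
        \<le> (variation f (t (Suc i)) - variation f (t i)) * W" if "i < n" for i
      unfolding increment[OF fh that] increment[OF h(1) that]
      using variation_mono[OF t_bounds[OF that]]
      by (intro order_trans[OF abs_set_integral_BV_diff_le[OF h(1) t_bounds[OF that]]]
          mult_left_mono[OF abs_h[OF that]]) simp
    show "\<bar>f (t (Suc i)) - f (t i)\<bar> \<le> variation f (t (Suc i)) - variation f (t i)" if "i < n" for i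
      using variation_add_abs_diff_le[OF t_bounds[OF that]] by linarith
    show "\<bar>LBINT x:{0..t i}. h x\<bar> \<le> B" if "i < n" for i
      using partial_integrals[OF that] by (simp add: t_def)
    obtain m where m: "n = Suc m"
      using \<open>0 < n\<close> gr0_conv_Suc by blast
    then have "m < n" by simp
    have "set_integrable lborel {t m<..t (Suc m)} h"
      using t_bounds[OF \<open>m < n\<close>] by (intro set_integrable_subset[OF h(1)]) auto
    then have "\<bar>LBINT x:{t m<..t (Suc m)}. h x\<bar> \<le> W"
      using set_integral_norm_bound[of lborel _ h] abs_h[OF \<open>m < n\<close>] by force
    then show "\<bar>(LBINT x:{0..t n}. h x) - (LBINT x:{0..t (n - 1)}. h x)\<bar> \<le> W"
      using increment[OF h(1) \<open>m < n\<close>] m by simp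
    show "variation f (t n) - variation f (t 0) \<le> variation f 1"
      using variation_nonneg_0 by (simp add: t_0 t_n)
  qed (use \<open>0 < n\<close> in simp)
  then show ?thesis by (simp add: t_n W_def)
qed

end

section \<open>The Menshov--Rademacher theorem\<close>

lemma power2_add_le_weighted:
  fixes u v t :: real
  assumes "t > 0"
  shows "(u + v)\<^sup>2 \<le> (1 + t) * u\<^sup>2 + (1 + 1 / t) * v\<^sup>2"
proof -
  have "0 \<le> (t * u - v)\<^sup>2 / t" using assms by simp
  also have "(t * u - v)\<^sup>2 / t = t * u\<^sup>2 - 2 * u * v + v\<^sup>2 / t"
    using assms by (simp add: power2_eq_square field_simps)
  finally show ?thesis by (simp add: power2_eq_square algebra_simps)
qed

lemma summable_abs_if_summable_weighted_square:
  fixes x :: "nat \<Rightarrow> real"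
  assumes "summable (\<lambda>m. (real m + 1)\<^sup>2 * (x m)\<^sup>2)"
  shows "summable (\<lambda>m. \<bar>x m\<bar>)"
proof -
  have inverse_squares: "summable (\<lambda>m. 1 / (real m + 1)\<^sup>2)"
    using summable_Suc_iff[of "\<lambda>m. 1 / (real m)\<^sup>2"] inverse_power_summable[of 2, where 'a=real]
    by (simp add: field_simps power_one_over del: inverse_power_summable)
  have "summable (\<lambda>m. 1 / (real m + 1)\<^sup>2 + (real m + 1)\<^sup>2 * (x m)\<^sup>2)"
    using inverse_squares assms by (rule summable_add)
  moreover have "norm \<bar>x m\<bar> \<le> 1 / (real m + 1)\<^sup>2 + (real m + 1)\<^sup>2 * (x m)\<^sup>2" for m
    using sum_squares_bound[of "1 / (real m + 1)" "(real m + 1) * \<bar>x m\<bar>"]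
    by (simp add: power_mult_distrib power_divide)
  ultimately show ?thesis
    by (rule summable_comparison_test')
qed

lemma convergent_dyadic_blocks:
  fixes P D :: "nat \<Rightarrow> real"
  assumes dyadic: "summable (\<lambda>m. P (2 ^ Suc m) - P (2 ^ m))"
    and D: "D \<longlonglongrightarrow> 0"
    and osc: "\<And>m n. 2 ^ m \<le> n \<Longrightarrow> n \<le> 2 ^ Suc m \<Longrightarrow> \<bar>P n - P (2 ^ m)\<bar> \<le> D m"
  shows "convergent P"
proof -
  have "(\<Sum>i<m. P (2 ^ Suc i) - P (2 ^ i)) = P (2 ^ m) - P 1" for m
    by (induction m) auto
  with dyadic have "convergent (\<lambda>m. P (2 ^ m) - P 1 + P 1)"
    by (intro convergent_add convergent_const) (simp add: summable_iff_convergent)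
  then obtain L where L: "(\<lambda>m. P (2 ^ m)) \<longlonglongrightarrow> L"
    by (auto simp: convergent_def)
  have "P \<longlonglongrightarrow> L"
  proof (rule LIMSEQ_I)
    fix r :: real assume "0 < r"
    then have r2: "0 < r / 2" by simp
    have "\<forall>\<^sub>F m in sequentially. \<bar>P (2 ^ m) - L\<bar> < r / 2 \<and> \<bar>D m\<bar> < r / 2"
      using tendstoD[OF L r2] tendstoD[OF D r2]
      by eventually_elim (simp add: dist_real_def)
    then obtain M where M: "\<And>m. m \<ge> M \<Longrightarrow> \<bar>P (2 ^ m) - L\<bar> < r / 2 \<and> \<bar>D m\<bar> < r / 2"
      unfolding eventually_sequentially by blast
    have "norm (P n - L) < r" if n: "n \<ge> 2 ^ M" for n
    proof -
      have "n \<ge> 1" using n one_le_power[of "2::nat" M] by linarith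
      then obtain m where m: "2 ^ m \<le> n" "n < 2 ^ Suc m"
        using ex_power_ivl1[of 2 n] by auto
      then have "M \<le> m"
        using n power_strict_increasing_iff[of "2::nat" M "Suc m"] by linarith
      moreover have "\<bar>P n - P (2 ^ m)\<bar> \<le> D m"
        using m by (intro osc) auto
      ultimately show ?thesis using M[of m] unfolding real_norm_def by linarith
    qed
    then show "\<exists>n0. \<forall>n\<ge>n0. norm (P n - L) < r" by blast
  qed
  then show ?thesis by (auto simp: convergent_def)
qed

lemma dyadic_index_le_ln:
  assumes "2 ^ m \<le> k"
  shows "real m + 1 \<le> 3 * ln (real k + 1)"
proof -
  have "real m * (2 / 3) \<le> real m * ln 2"
    using ln2_ge_two_thirds by (intro mult_left_mono) auto
  also have "real m * ln 2 = ln (real (2 ^ m))"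
    by (simp add: ln_realpow)
  also have "\<dots> \<le> ln (real k + 1)"
  proof -
    have "real (2 ^ m) \<le> real k + 1" using assms by linarith
    then show ?thesis by simp
  qed
  finally have "real m * (2 / 3) \<le> ln (real k + 1)" .
  moreover have "2 / 3 \<le> ln (real k + 1)"
  proof -
    have "1 \<le> k" using assms one_le_power[of "2::nat" m] by linarith
    then have "ln 2 \<le> ln (real k + 1)" by simp
    then show ?thesis using ln2_ge_two_thirds by linarith
  qed
  ultimately show ?thesis by linarith
qed

lemma summable_dyadic_block_sums:
  fixes w :: "nat \<Rightarrow> real"
  assumes "summable w" "\<And>k. 0 \<le> w k"
  shows "summable (\<lambda>m. \<Sum>k\<in>{2 ^ m..<2 ^ m + 2 ^ m}. w k)"
proof (rule summableI_nonneg_bounded)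
  show "0 \<le> (\<Sum>k\<in>{2 ^ m..<2 ^ m + 2 ^ m}. w k)" for m
    using assms(2) by (simp add: sum_nonneg)
  have blocks: "(\<Sum>m<N. \<Sum>k\<in>{2 ^ m..<2 ^ m + 2 ^ m}. w k) = (\<Sum>k\<in>{1..<2 ^ N}. w k)" for N
  proof (induction N)
    case (Suc N)
    then show ?case
      by (simp add: sum.atLeastLessThan_concat mult_2 del: sum.op_ivl_Suc)
  qed simp
  show "(\<Sum>m<N. \<Sum>k\<in>{2 ^ m..<2 ^ m + 2 ^ m}. w k) \<le> suminf w" for N
    unfolding blocks using assms by (intro sum_le_suminf) auto
qed

lemma dyadic_block_weight_le:
  fixes c :: "nat \<Rightarrow> real"
  shows "(real m + 1)\<^sup>2 * (\<Sum>k\<in>{2 ^ m..<2 ^ m + 2 ^ m}. (c k)\<^sup>2)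
    \<le> 9 * (\<Sum>k\<in>{2 ^ m..<2 ^ m + 2 ^ m}. (c k)\<^sup>2 * (ln (real k + 1))\<^sup>2)"
proof -
  have "(real m + 1)\<^sup>2 * (c k)\<^sup>2 \<le> 9 * ((c k)\<^sup>2 * (ln (real k + 1))\<^sup>2)" if "2 ^ m \<le> k" for k
  proof -
    have "(real m + 1)\<^sup>2 \<le> (3 * ln (real k + 1))\<^sup>2"
      using dyadic_index_le_ln[OF that] by (intro power_mono) auto
    then have "(real m + 1)\<^sup>2 * (c k)\<^sup>2 \<le> (3 * ln (real k + 1))\<^sup>2 * (c k)\<^sup>2"
      by (rule mult_right_mono) simp
    then show ?thesis by (simp add: power_mult_distrib mult_ac)
  qed
  then show ?thesis
    unfolding sum_distrib_left by (intro sum_mono) auto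
qed

lemma AE_summable_if_summable_nn_integrals:
  fixes g :: "nat \<Rightarrow> 'a \<Rightarrow> real"
  assumes [measurable]: "\<And>m. g m \<in> borel_measurable M"
    and "\<And>m x. 0 \<le> g m x"
    and "\<And>m. (\<integral>\<^sup>+x. g m x \<partial>M) \<le> ennreal (u m)"
    and "summable u" "\<And>m. 0 \<le> u m"
  shows "AE x in M. summable (\<lambda>m. g m x)"
proof -
  have "(\<integral>\<^sup>+x. (\<Sum>m. ennreal (g m x)) \<partial>M) = (\<Sum>m. \<integral>\<^sup>+x. g m x \<partial>M)"
    by (rule nn_integral_suminf) simp
  also have "\<dots> \<le> (\<Sum>m. ennreal (u m))"
    using assms(3) by (intro suminf_le summableI)
  also have "\<dots> < \<infinity>"
    using ennreal_suminf_neq_top[OF assms(4,5)] by (simp add: less_top)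
  finally have "AE x in M. (\<Sum>m. ennreal (g m x)) \<noteq> \<infinity>"
    by (intro nn_integral_noteq_infinite) (auto simp: less_top)
  then show ?thesis
    by eventually_elim (use assms(2) in \<open>auto intro: summable_suminf_not_top\<close>)
qed

lemma Rademacher_Menshov_weight_step:
  fixes A B :: real
  assumes "0 \<le> A" "0 \<le> B"
  shows "(real m + 1)\<^sup>2 * A + (real m + 2) * A + (real m + 2) * (real m + 1) * B
    \<le> (real m + 2)\<^sup>2 * (A + B)"
proof -
  have "((real m + 1)\<^sup>2 + (real m + 2)) * A \<le> (real m + 2)\<^sup>2 * A"
    using assms by (intro mult_right_mono) (auto simp: power2_eq_square algebra_simps)
  moreover have "(real m + 2) * (real m + 1) * B \<le> (real m + 2)\<^sup>2 * B"
    using assms by (intro mult_right_mono) (auto simp: power2_eq_square)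
  ultimately show ?thesis by (simp add: algebra_simps)
qed

locale orthonormal_seq =
  fixes M :: "'a measure" and \<psi> :: "nat \<Rightarrow> 'a \<Rightarrow> real"
  assumes borel_measurable [measurable]: "\<And>k. \<psi> k \<in> borel_measurable M"
    and integrable_square: "\<And>k. integrable M (\<lambda>x. (\<psi> k x)\<^sup>2)"
    and orthonormal: "\<And>k l. (\<integral>x. \<psi> k x * \<psi> l x \<partial>M) = (if k = l then 1 else 0)"
begin

lemma integrable_mult: "integrable M (\<lambda>x. \<psi> k x * \<psi> l x)"
proof (rule Bochner_Integration.integrable_bound)
  show "integrable M (\<lambda>x. (\<psi> k x)\<^sup>2 + (\<psi> l x)\<^sup>2)"
    using integrable_square by auto
  have "\<bar>u * v\<bar> \<le> u\<^sup>2 + v\<^sup>2" for u v :: real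
    using sum_squares_bound[of "\<bar>u\<bar>" "\<bar>v\<bar>"] abs_ge_zero[of "u * v"]
    by (simp only: abs_mult power2_abs)
  then show "AE x in M. norm (\<psi> k x * \<psi> l x) \<le> norm ((\<psi> k x)\<^sup>2 + (\<psi> l x)\<^sup>2)"
    by simp
qed measurable

lemma
  assumes "finite K"
  shows integrable_square_sum: "integrable M (\<lambda>x. (\<Sum>k\<in>K. c k * \<psi> k x)\<^sup>2)"
    and integral_square_sum: "(\<integral>x. (\<Sum>k\<in>K. c k * \<psi> k x)\<^sup>2 \<partial>M) = (\<Sum>k\<in>K. (c k)\<^sup>2)"
proof -
  have expand: "(\<Sum>k\<in>K. c k * \<psi> k x)\<^sup>2 = (\<Sum>k\<in>K. \<Sum>l\<in>K. (c k * c l) * (\<psi> k x * \<psi> l x))" for x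
    by (simp add: power2_eq_square sum_product mult_ac)
  show "integrable M (\<lambda>x. (\<Sum>k\<in>K. c k * \<psi> k x)\<^sup>2)"
    unfolding expand using integrable_mult by auto
  have "(\<integral>x. (\<Sum>k\<in>K. c k * \<psi> k x)\<^sup>2 \<partial>M) = (\<Sum>k\<in>K. \<Sum>l\<in>K. (c k * c l) * (if k = l then 1 else 0))"
    unfolding expand using integrable_mult by (simp add: orthonormal)
  also have "\<dots> = (\<Sum>k\<in>K. (c k)\<^sup>2)"
    using assms by (simp add: power2_eq_square if_distrib cong: if_cong)
  finally show "(\<integral>x. (\<Sum>k\<in>K. c k * \<psi> k x)\<^sup>2 \<partial>M) = (\<Sum>k\<in>K. (c k)\<^sup>2)" .
qed

lemma nn_integral_square_sum:
  "finite K \<Longrightarrow> (\<integral>\<^sup>+x. ennreal ((\<Sum>k\<in>K. c k * \<psi> k x)\<^sup>2) \<partial>M) = ennreal (\<Sum>k\<in>K. (c k)\<^sup>2)"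
  by (simp add: nn_integral_eq_integral integrable_square_sum integral_square_sum)

definition block_sum :: "(nat \<Rightarrow> real) \<Rightarrow> nat \<Rightarrow> nat \<Rightarrow> 'a \<Rightarrow> real" where
  "block_sum c s j x = (\<Sum>k\<in>{s..<s + j}. c k * \<psi> k x)"

definition block_max :: "(nat \<Rightarrow> real) \<Rightarrow> nat \<Rightarrow> nat \<Rightarrow> 'a \<Rightarrow> real" where
  "block_max c m s x = Max ((\<lambda>j. \<bar>block_sum c s j x\<bar>) ` {..2 ^ m})"

lemma block_sum_borel_measurable [measurable]: "block_sum c s j \<in> borel_measurable M"
  unfolding block_sum_def by measurable

lemma block_max_borel_measurable [measurable]: "block_max c m s \<in> borel_measurable M"
  unfolding block_max_def by (intro borel_measurable_Max) auto

lemma block_sum_add: "block_sum c s (i + j) x = block_sum c s i x + block_sum c (s + i) j x"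
  unfolding block_sum_def by (simp add: sum.atLeastLessThan_concat add.assoc)

lemma abs_block_sum_le_block_max: "j \<le> 2 ^ m \<Longrightarrow> \<bar>block_sum c s j x\<bar> \<le> block_max c m s x"
  unfolding block_max_def by (intro Max_ge) auto

lemma block_max_nonneg: "0 \<le> block_max c m s x"
  using abs_block_sum_le_block_max[of 0 m c s x] by simp

lemma block_max_Suc_le:
  "block_max c (Suc m) s x
    \<le> max (block_max c m s x) (\<bar>block_sum c s (2 ^ m) x\<bar> + block_max c m (s + 2 ^ m) x)"
proof -
  have "\<bar>block_sum c s j x\<bar>
      \<le> max (block_max c m s x) (\<bar>block_sum c s (2 ^ m) x\<bar> + block_max c m (s + 2 ^ m) x)"
    if j: "j \<le> 2 ^ Suc m" for j
  proof (cases "j \<le> 2 ^ m")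
    case True
    then show ?thesis by (meson abs_block_sum_le_block_max max.coboundedI1)
  next
    case False
    then have "block_sum c s j x = block_sum c s (2 ^ m) x + block_sum c (s + 2 ^ m) (j - 2 ^ m) x"
      using block_sum_add[of c s "2 ^ m" "j - 2 ^ m"] by simp
    moreover have "\<bar>block_sum c (s + 2 ^ m) (j - 2 ^ m) x\<bar> \<le> block_max c m (s + 2 ^ m) x"
      using j by (intro abs_block_sum_le_block_max) auto
    ultimately show ?thesis by (simp add: max.coboundedI2)
  qed
  then show ?thesis
    unfolding block_max_def[of c "Suc m"] by (intro Max.boundedI) auto
qed

lemma nn_integral_square_block_sum:
  "(\<integral>\<^sup>+x. ennreal ((block_sum c s j x)\<^sup>2) \<partial>M) = ennreal (\<Sum>k\<in>{s..<s + j}. (c k)\<^sup>2)"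
  unfolding block_sum_def by (rule nn_integral_square_sum) simp

lemma square_block_max_Suc_le:
  "(block_max c (Suc m) s x)\<^sup>2 \<le> (block_max c m s x)\<^sup>2
    + (real m + 2) * (block_sum c s (2 ^ m) x)\<^sup>2
    + ((real m + 2) / (real m + 1)) * (block_max c m (s + 2 ^ m) x)\<^sup>2"
proof -
  have "(block_max c (Suc m) s x)\<^sup>2
      \<le> (max (block_max c m s x) (\<bar>block_sum c s (2 ^ m) x\<bar> + block_max c m (s + 2 ^ m) x))\<^sup>2"
    using block_max_Suc_le block_max_nonneg by (intro power_mono)
  also have "\<dots> \<le> (block_max c m s x)\<^sup>2
      + (\<bar>block_sum c s (2 ^ m) x\<bar> + block_max c m (s + 2 ^ m) x)\<^sup>2"
    by (simp add: max_def)
  also have "(\<bar>block_sum c s (2 ^ m) x\<bar> + block_max c m (s + 2 ^ m) x)\<^sup>2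
      \<le> (1 + (real m + 1)) * \<bar>block_sum c s (2 ^ m) x\<bar>\<^sup>2
        + (1 + 1 / (real m + 1)) * (block_max c m (s + 2 ^ m) x)\<^sup>2"
    \<comment> \<open>the weight \<open>m + 1\<close> is what lets the induction below close with the factor \<open>(m + 2)\<^sup>2\<close>\<close>
    by (rule power2_add_le_weighted) simp
  finally show ?thesis by (simp add: field_simps)
qed

theorem Rademacher_Menshov_maximal_inequality:
  "(\<integral>\<^sup>+x. ennreal ((block_max c m s x)\<^sup>2) \<partial>M)
    \<le> ennreal ((real m + 1)\<^sup>2 * (\<Sum>k\<in>{s..<s + 2 ^ m}. (c k)\<^sup>2))"
proof (induction m arbitrary: s)
  case 0
  have "block_max c 0 s x = \<bar>block_sum c s 1 x\<bar>" for x
  proof -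
    have "{..(2::nat) ^ 0} = {0, 1}" by auto
    then show ?thesis by (simp add: block_max_def block_sum_def)
  qed
  then show ?case
    using nn_integral_square_block_sum[of c s 1] by simp
next
  case (Suc m)
  define A where "A = (\<Sum>k\<in>{s..<s + 2 ^ m}. (c k)\<^sup>2)"
  define B where "B = (\<Sum>k\<in>{s + 2 ^ m..<s + 2 ^ m + 2 ^ m}. (c k)\<^sup>2)"
  have "0 \<le> A" "0 \<le> B" by (simp_all add: A_def B_def sum_nonneg)
  have "(\<Sum>k\<in>{s..<s + 2 ^ Suc m}. (c k)\<^sup>2) = A + B"
    unfolding A_def B_def by (simp add: sum.atLeastLessThan_concat mult_2 add.assoc)
  have "(\<integral>\<^sup>+x. ennreal ((block_max c (Suc m) s x)\<^sup>2) \<partial>M)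
      \<le> (\<integral>\<^sup>+x. ennreal ((block_max c m s x)\<^sup>2)
          + ennreal (real m + 2) * ennreal ((block_sum c s (2 ^ m) x)\<^sup>2)
          + ennreal ((real m + 2) / (real m + 1)) * ennreal ((block_max c m (s + 2 ^ m) x)\<^sup>2) \<partial>M)"
    using square_block_max_Suc_le by (intro nn_integral_mono) (simp flip: ennreal_plus ennreal_mult)
  also have "\<dots> = (\<integral>\<^sup>+x. ennreal ((block_max c m s x)\<^sup>2) \<partial>M)
      + ennreal (real m + 2) * (\<integral>\<^sup>+x. ennreal ((block_sum c s (2 ^ m) x)\<^sup>2) \<partial>M)
      + ennreal ((real m + 2) / (real m + 1)) * (\<integral>\<^sup>+x. ennreal ((block_max c m (s + 2 ^ m) x)\<^sup>2) \<partial>M)"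
    unfolding block_sum_def by (simp add: nn_integral_add nn_integral_cmult)
  also have "\<dots> \<le> ennreal ((real m + 1)\<^sup>2 * A) + ennreal (real m + 2) * ennreal A
      + ennreal ((real m + 2) / (real m + 1)) * ennreal ((real m + 1)\<^sup>2 * B)"
    using Suc.IH[of s] Suc.IH[of "s + 2 ^ m"] nn_integral_square_block_sum[of c s "2 ^ m"]
    unfolding A_def B_def by (intro add_mono mult_left_mono) (auto simp: add.assoc)
  also have "\<dots> = ennreal ((real m + 1)\<^sup>2 * A + (real m + 2) * A + (real m + 2) * (real m + 1) * B)"
  proof -
    have "(real m + 2) / (real m + 1) * ((real m + 1)\<^sup>2 * B) = (real m + 2) * (real m + 1) * B"
      by (simp add: field_simps power2_eq_square)
    then show ?thesis
      using \<open>0 \<le> A\<close> \<open>0 \<le> B\<close> by (simp flip: ennreal_plus ennreal_mult)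
  qed
  also have "\<dots> \<le> ennreal ((real (Suc m) + 1)\<^sup>2 * (A + B))"
    using Rademacher_Menshov_weight_step[OF \<open>0 \<le> A\<close> \<open>0 \<le> B\<close>, of m]
    by (intro ennreal_leI) (simp add: add.commute)
  finally show ?case using \<open>(\<Sum>k\<in>{s..<s + 2 ^ Suc m}. (c k)\<^sup>2) = A + B\<close> by simp
qed

lemma summable_if_dyadic_block_bounds:
  assumes "summable (\<lambda>m. (real m + 1)\<^sup>2 * (block_sum c (2 ^ m) (2 ^ m) x)\<^sup>2)"
    and "summable (\<lambda>m. (block_max c m (2 ^ m) x)\<^sup>2)"
  shows "summable (\<lambda>k. c k * \<psi> k x)"
proof -
  define P where "P n = block_sum c 0 n x" for n
  have "convergent P"
  proof (rule convergent_dyadic_blocks)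
    have "P (2 ^ Suc m) - P (2 ^ m) = block_sum c (2 ^ m) (2 ^ m) x" for m
      using block_sum_add[of c 0 "2 ^ m" "2 ^ m" x] by (simp add: P_def mult_2)
    then show "summable (\<lambda>m. P (2 ^ Suc m) - P (2 ^ m))"
      using summable_abs_if_summable_weighted_square[OF assms(1)] by (simp add: summable_rabs_cancel)
    have "(\<lambda>m. sqrt ((block_max c m (2 ^ m) x)\<^sup>2)) \<longlonglongrightarrow> sqrt 0"
      using summable_LIMSEQ_zero[OF assms(2)] by (intro tendsto_real_sqrt)
    then show "(\<lambda>m. block_max c m (2 ^ m) x) \<longlonglongrightarrow> 0"
      using block_max_nonneg by simp
    show "\<bar>P n - P (2 ^ m)\<bar> \<le> block_max c m (2 ^ m) x" if "2 ^ m \<le> n" "n \<le> 2 ^ Suc m" for m n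
      using that block_sum_add[of c 0 "2 ^ m" "n - 2 ^ m" x]
      by (simp add: P_def abs_block_sum_le_block_max)
  qed
  moreover have "P = (\<lambda>n. \<Sum>k<n. c k * \<psi> k x)"
    by (simp add: P_def block_sum_def atLeast0LessThan fun_eq_iff)
  ultimately show ?thesis
    by (simp add: summable_iff_convergent)
qed

theorem Menshov_Rademacher:
  assumes "summable (\<lambda>k. (c k)\<^sup>2 * (ln (real k + 1))\<^sup>2)"
  shows "AE x in M. summable (\<lambda>k. c k * \<psi> k x)"
proof -
  define u where "u m = 9 * (\<Sum>k\<in>{2 ^ m..<2 ^ m + 2 ^ m}. (c k)\<^sup>2 * (ln (real k + 1))\<^sup>2)" for m
  have "summable u"
    unfolding u_def using assms by (intro summable_mult summable_dyadic_block_sums) auto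
  have u_nonneg: "0 \<le> u m" for m
    by (simp add: u_def sum_nonneg)
  have weighted_block: "(real m + 1)\<^sup>2 * (\<Sum>k\<in>{2 ^ m..<2 ^ m + 2 ^ m}. (c k)\<^sup>2) \<le> u m" for m
    unfolding u_def by (rule dyadic_block_weight_le)
  have "AE x in M. summable (\<lambda>m. (real m + 1)\<^sup>2 * (block_sum c (2 ^ m) (2 ^ m) x)\<^sup>2)"
  proof (rule AE_summable_if_summable_nn_integrals[OF _ _ _ \<open>summable u\<close> u_nonneg])
    fix m
    have "(\<integral>\<^sup>+x. ennreal ((real m + 1)\<^sup>2 * (block_sum c (2 ^ m) (2 ^ m) x)\<^sup>2) \<partial>M)
        = ennreal ((real m + 1)\<^sup>2) * (\<integral>\<^sup>+x. ennreal ((block_sum c (2 ^ m) (2 ^ m) x)\<^sup>2) \<partial>M)"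
      by (simp add: ennreal_mult nn_integral_cmult)
    also have "\<dots> = ennreal ((real m + 1)\<^sup>2 * (\<Sum>k\<in>{2 ^ m..<2 ^ m + 2 ^ m}. (c k)\<^sup>2))"
      by (simp add: nn_integral_square_block_sum ennreal_mult sum_nonneg)
    also have "\<dots> \<le> ennreal (u m)"
      using weighted_block by (rule ennreal_leI)
    finally show "(\<integral>\<^sup>+x. ennreal ((real m + 1)\<^sup>2 * (block_sum c (2 ^ m) (2 ^ m) x)\<^sup>2) \<partial>M) \<le> ennreal (u m)" .
  qed auto
  moreover have "AE x in M. summable (\<lambda>m. (block_max c m (2 ^ m) x)\<^sup>2)"
  proof (rule AE_summable_if_summable_nn_integrals[OF _ _ _ \<open>summable u\<close> u_nonneg])
    show "(\<integral>\<^sup>+x. ennreal ((block_max c m (2 ^ m) x)\<^sup>2) \<partial>M) \<le> ennreal (u m)" for m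
      using Rademacher_Menshov_maximal_inequality[of c m "2 ^ m"] ennreal_leI[OF weighted_block[of m]]
      by (rule order_trans)
  qed auto
  ultimately show ?thesis
    by eventually_elim (rule summable_if_dyadic_block_bounds)
qed

end

section \<open>Landau's theorem\<close>

lemma summable_square_div_partial_sums:
  fixes b :: "nat \<Rightarrow> real"
  shows "summable (\<lambda>k. (b k / (1 + (\<Sum>j\<le>k. (b j)\<^sup>2)))\<^sup>2)"
proof (rule summableI_nonneg_bounded)
  define B where "B n = 1 + (\<Sum>j<n. (b j)\<^sup>2)" for n
  have B_pos: "0 < B n" for n
    unfolding B_def by (simp add: add_pos_nonneg sum_nonneg)
  have "(b k / B (Suc k))\<^sup>2 \<le> 1 / B k - 1 / B (Suc k)" for k
  proof -
    have "B k \<le> B (Suc k)" by (simp add: B_def)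
    then have "(b k)\<^sup>2 / (B (Suc k) * B (Suc k)) \<le> (b k)\<^sup>2 / (B k * B (Suc k))"
      using B_pos[of k] B_pos[of "Suc k"]
      by (intro divide_left_mono mult_right_mono mult_pos_pos) auto
    also have "\<dots> = 1 / B k - 1 / B (Suc k)"
      using B_pos[of k] B_pos[of "Suc k"] by (simp add: B_def field_simps)
    finally show ?thesis by (simp add: power_divide power2_eq_square)
  qed
  then have "(\<Sum>k<n. (b k / B (Suc k))\<^sup>2) \<le> (\<Sum>k<n. 1 / B k - 1 / B (Suc k))" for n
    by (intro sum_mono)
  also have "(\<Sum>k<n. 1 / B k - 1 / B (Suc k)) \<le> 1" for n
    using sum_lessThan_telescope'[of "\<lambda>k. 1 / B k" n] B_pos[of n] by (simp add: B_def)
  finally show "(\<Sum>k<n. (b k / (1 + (\<Sum>j\<le>k. (b j)\<^sup>2)))\<^sup>2) \<le> 1" for n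
    by (simp add: B_def lessThan_Suc_atMost)
qed simp

lemma not_summable_imp_unbounded_partial_sums:
  fixes w :: "nat \<Rightarrow> real"
  assumes "\<not> summable w" "\<And>k. 0 \<le> w k"
  obtains n where "K < (\<Sum>k<n. w k)"
  using assms summableI_nonneg_bounded[of w K] by (meson not_le)

theorem Abel_Dini_divergence:
  fixes b :: "nat \<Rightarrow> real"
  assumes "\<not> summable (\<lambda>k. (b k)\<^sup>2)"
  shows "\<not> summable (\<lambda>k. (b k)\<^sup>2 / (1 + (\<Sum>j\<le>k. (b j)\<^sup>2)))"
proof
  define B where "B n = 1 + (\<Sum>j<n. (b j)\<^sup>2)" for n
  have B_pos: "0 < B n" for n
    unfolding B_def by (simp add: add_pos_nonneg sum_nonneg)
  have B_mono: "B m \<le> B n" if "m \<le> n" for m n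
    unfolding B_def using that by (simp add: sum_mono2)
  have B_Suc: "B (Suc k) = 1 + (\<Sum>j\<le>k. (b j)\<^sup>2)" for k
    unfolding B_def lessThan_Suc_atMost ..
  define c where "c k = (b k)\<^sup>2 / B (Suc k)" for k
  assume "summable (\<lambda>k. (b k)\<^sup>2 / (1 + (\<Sum>j\<le>k. (b j)\<^sup>2)))"
  then have "summable c"
    unfolding c_def[abs_def] B_Suc .
  then obtain N where N: "norm (\<Sum>i. c (i + N)) < 1 / 2"
    using suminf_exist_split[of "1 / 2" c] by auto
  obtain n where "2 * B N - 1 < (\<Sum>j<n. (b j)\<^sup>2)"
    using not_summable_imp_unbounded_partial_sums[OF assms] by auto
  then have n: "2 * B N < B n"
    by (simp add: B_def)
  then have "N \<le> n"
    using B_mono[of n N] B_pos[of N] by linarith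
  have "1 / 2 < (B n - B N) / B n"
    using n B_pos[of n] by (simp add: field_simps)
  also have "B n - B N = (\<Sum>k\<in>{N..<n}. (b k)\<^sup>2)"
    using \<open>N \<le> n\<close> by (simp add: B_def atLeast0LessThan[symmetric] sum.atLeastLessThan_concat[symmetric, of 0 N n])
  also have "(\<Sum>k\<in>{N..<n}. (b k)\<^sup>2) / B n \<le> (\<Sum>k\<in>{N..<n}. c k)"
    unfolding sum_divide_distrib c_def
  proof (intro sum_mono divide_left_mono)
    show "B (Suc k) \<le> B n" if "k \<in> {N..<n}" for k
      using that by (intro B_mono) auto
  qed (use B_pos in auto)
  also have "(\<Sum>k\<in>{N..<n}. c k) = (\<Sum>i<n - N. c (i + N))"
    using \<open>N \<le> n\<close> sum.shift_bounds_nat_ivl[of c 0 N "n - N"] by (simp add: atLeast0LessThan add.commute)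
  also have "\<dots> \<le> (\<Sum>i. c (i + N))"
  proof (rule sum_le_suminf)
    show "summable (\<lambda>i. c (i + N))"
      using \<open>summable c\<close> by (rule summable_ignore_initial_segment)
  qed (auto simp: c_def less_imp_le[OF B_pos])
  finally show False using N by simp
qed

theorem Landau_square_summable:
  fixes b :: "nat \<Rightarrow> real"
  assumes "\<And>a. summable (\<lambda>k. (a k)\<^sup>2) \<Longrightarrow> (\<lambda>n. \<Sum>k<n. a k * b k) \<in> O(\<lambda>_. 1)"
  shows "summable (\<lambda>k. (b k)\<^sup>2)"
proof (rule ccontr)
  assume not_summable: "\<not> summable (\<lambda>k. (b k)\<^sup>2)"
  define a where "a k = b k / (1 + (\<Sum>j\<le>k. (b j)\<^sup>2))" for k
  have a_b: "a k * b k = (b k)\<^sup>2 / (1 + (\<Sum>j\<le>k. (b j)\<^sup>2))" for k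
    by (simp add: a_def power2_eq_square)
  have a_b_nonneg: "0 \<le> a k * b k" for k
    unfolding a_b by (simp add: add_nonneg_nonneg sum_nonneg)
  have "summable (\<lambda>k. (a k)\<^sup>2)"
    unfolding a_def by (rule summable_square_div_partial_sums)
  then have "(\<lambda>n. \<Sum>k<n. a k * b k) \<in> O(\<lambda>_. 1)"
    by (rule assms)
  then obtain K where "\<forall>\<^sub>F n in sequentially. norm (\<Sum>k<n. a k * b k) \<le> K"
    by (auto elim: landau_o.bigE)
  then obtain N where N: "\<And>n. N \<le> n \<Longrightarrow> (\<Sum>k<n. a k * b k) \<le> K"
    unfolding eventually_sequentially by force
  have "(\<Sum>k<n. a k * b k) \<le> K" for n
    using N[of "max n N"] sum_mono2[of "{..<max n N}" "{..<n}" "\<lambda>k. a k * b k"] a_b_nonneg by simp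
  then have "summable (\<lambda>k. a k * b k)"
    using a_b_nonneg by (intro summableI_nonneg_bounded)
  with Abel_Dini_divergence[OF not_summable] show False
    by (simp add: a_b)
qed

section \<open>Orthonormal systems on [0,1] and the polynomials Q_n\<close>

lemma orthonormal_systemD:
  assumes "orthonormal_system \<phi>" "1 \<le> n"
  shows "\<phi> n \<in> borel_measurable lborel"
    and "set_integrable lborel {0..1} (\<lambda>x. (\<phi> n x)\<^sup>2)"
  using assms unfolding orthonormal_system_def by blast+

lemma orthonormal_system_inner:
  assumes "orthonormal_system \<phi>" "1 \<le> n" "1 \<le> m"
  shows "(LBINT x:{0..1}. \<phi> n x * \<phi> m x) = (if n = m then 1 else 0)"
  using assms unfolding orthonormal_system_def by blast

context
  fixes \<phi> :: "nat \<Rightarrow> real \<Rightarrow> real"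
  assumes ons: "orthonormal_system \<phi>"
begin

lemma orthonormal_system_borel_measurable [measurable]:
  "\<phi> (Suc k) \<in> borel_measurable lborel"
  using orthonormal_systemD(1)[OF ons] by simp

lemma orthonormal_system_set_integrable:
  "set_integrable lborel {0..1} (\<phi> (Suc k))"
  using orthonormal_system_borel_measurable orthonormal_systemD(2)[OF ons, of "Suc k"]
  by (rule set_integrable_if_square) simp

lemma orthonormal_system_orthonormal_seq:
  "orthonormal_seq lborel (\<lambda>k x. indicator {0..1} x * \<phi> (Suc k) x)"
proof
  show "integrable lborel (\<lambda>x. (indicator {0..1} x * \<phi> (Suc k) x)\<^sup>2)" for k
  proof -
    have "(indicator {0..1} x * \<phi> (Suc k) x)\<^sup>2 = indicator {0..1} x *\<^sub>R (\<phi> (Suc k) x)\<^sup>2" for x :: real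
      by (simp split: split_indicator)
    then show ?thesis
      using orthonormal_systemD(2)[OF ons, of "Suc k"] unfolding set_integrable_def by simp
  qed
  show "(\<integral>x. indicator {0..1} x * \<phi> (Suc k) x * (indicator {0..1} x * \<phi> (Suc l) x) \<partial>lborel)
      = (if k = l then 1 else 0)" for k l
  proof -
    have "(\<lambda>x. indicator {0..1} x * \<phi> (Suc k) x * (indicator {0..1} x * \<phi> (Suc l) x))
        = (\<lambda>x. indicator {0..1} x *\<^sub>R (\<phi> (Suc k) x * \<phi> (Suc l) x))"
      by (auto simp: fun_eq_iff split: split_indicator)
    then show ?thesis
      using orthonormal_system_inner[OF ons, of "Suc k" "Suc l"]
      unfolding set_lebesgue_integral_def by simp
  qed
qed measurable

interpretation shifted: orthonormal_seq lborel "\<lambda>k x. indicator {0..1} x * \<phi> (Suc k) x"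
  by (rule orthonormal_system_orthonormal_seq)

lemma indicator_Qn_eq:
  "indicator {0..1} x * Qn \<phi> n d a x
    = (\<Sum>k<n. d (Suc k) * a (Suc k) * ln (real (Suc k)) * (indicator {0..1} x * \<phi> (Suc k) x))"
  unfolding Qn_def One_nat_def sum.atLeast1_atMost_eq by (simp add: sum_distrib_left mult_ac)

lemma set_integrable_Qn: "set_integrable lborel {0..1} (Qn \<phi> n d a)"
proof -
  have "integrable lborel (\<lambda>x. \<Sum>k<n. d (Suc k) * a (Suc k) * ln (real (Suc k))
      * (indicator {0..1} x * \<phi> (Suc k) x))"
    using orthonormal_system_set_integrable unfolding set_integrable_def
    by simp
  then show ?thesis
    unfolding set_integrable_def real_scaleR_def indicator_Qn_eq .
qed

lemma
  shows set_integrable_Qn_square: "set_integrable lborel {0..1} (\<lambda>x. (Qn \<phi> n d a x)\<^sup>2)"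
    and set_integral_Qn_square:
      "(LBINT x:{0..1}. (Qn \<phi> n d a x)\<^sup>2) = (\<Sum>k=1..n. (d k * a k * ln (real k))\<^sup>2)"
proof -
  have "indicator {0..1} x *\<^sub>R (Qn \<phi> n d a x)\<^sup>2
      = (\<Sum>k<n. d (Suc k) * a (Suc k) * ln (real (Suc k)) * (indicator {0..1} x * \<phi> (Suc k) x))\<^sup>2"
    for x :: real
  proof -
    have "indicator {0..1} x *\<^sub>R (Qn \<phi> n d a x)\<^sup>2 = (indicator {0..1} x * Qn \<phi> n d a x)\<^sup>2"
      by (simp split: split_indicator)
    then show ?thesis
      unfolding indicator_Qn_eq .
  qed
  then show "set_integrable lborel {0..1} (\<lambda>x. (Qn \<phi> n d a x)\<^sup>2)"
    "(LBINT x:{0..1}. (Qn \<phi> n d a x)\<^sup>2) = (\<Sum>k=1..n. (d k * a k * ln (real k))\<^sup>2)"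
    unfolding set_integrable_def set_lebesgue_integral_def
    by (simp_all add: shifted.integrable_square_sum shifted.integral_square_sum
        One_nat_def sum.atLeast1_atMost_eq)
qed

lemma sum_coef_eq_set_integral_Qn:
  assumes f: "BV01 f"
  shows "(\<Sum>k=1..n. d k * a k * ln (real k) * coef \<phi> f k) = (LBINT x:{0..1}. f x * Qn \<phi> n d a x)"
proof -
  have integrable: "integrable lborel (\<lambda>x. indicator {0..1} x *\<^sub>R (f x * \<phi> (Suc k) x))" for k
    using BV01_set_integrable_mult[OF f orthonormal_system_set_integrable]
    unfolding set_integrable_def .
  have "(LBINT x:{0..1}. f x * Qn \<phi> n d a x) = (\<integral>x. (\<Sum>k<n. d (Suc k) * a (Suc k) * ln (real (Suc k))
      * (indicator {0..1} x *\<^sub>R (f x * \<phi> (Suc k) x))) \<partial>lborel)"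
    unfolding set_lebesgue_integral_def Qn_def One_nat_def sum.atLeast1_atMost_eq
    by (simp add: sum_distrib_left mult_ac)
  also have "\<dots> = (\<Sum>k<n. d (Suc k) * a (Suc k) * ln (real (Suc k)) * coef \<phi> f (Suc k))"
    using integrable by (simp add: coef_def set_lebesgue_integral_def)
  finally show ?thesis
    by (simp add: One_nat_def sum.atLeast1_atMost_eq)
qed

lemma sum_pairing_eq_set_integral_Qn:
  assumes "BV01 f"
  shows "(\<Sum>k<Suc n. a k * (d k * ln (real k) * coef \<phi> f k)) = (LBINT x:{0..1}. f x * Qn \<phi> n d a x)"
proof -
  \<comment> \<open>the term \<open>k = 0\<close> vanishes because \<open>ln 0 = 0\<close>\<close>
  have "(\<Sum>k<Suc n. a k * (d k * ln (real k) * coef \<phi> f k))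
      = (\<Sum>k=1..n. d k * a k * ln (real k) * coef \<phi> f k)"
    by (simp add: lessThan_Suc_atMost atMost_atLeast0 sum.atLeast_Suc_atMost[of 0] mult_ac)
  then show ?thesis
    using sum_coef_eq_set_integral_Qn[OF assms] by simp
qed

lemma set_integral_Qn_square_le:
  assumes d_ln: "\<And>k. (d k * ln (real k))\<^sup>2 \<le> K * real k" "0 \<le> K"
    and a: "summable (\<lambda>k. (a k)\<^sup>2)"
  shows "(LBINT x:{0..1}. (Qn \<phi> n d a x)\<^sup>2) \<le> K * real n * (\<Sum>k. (a k)\<^sup>2)"
proof -
  have "(\<Sum>k=1..n. (d k * a k * ln (real k))\<^sup>2) \<le> (\<Sum>k=1..n. K * real n * (a k)\<^sup>2)"
  proof (intro sum_mono)
    fix k assume "k \<in> {1..n}"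
    then have "K * real k \<le> K * real n"
      using d_ln(2) by (intro mult_left_mono) auto
    then have "(d k * ln (real k))\<^sup>2 * (a k)\<^sup>2 \<le> K * real n * (a k)\<^sup>2"
      using d_ln(1)[of k] by (intro mult_right_mono) auto
    then show "(d k * a k * ln (real k))\<^sup>2 \<le> K * real n * (a k)\<^sup>2"
      by (simp add: power_mult_distrib mult_ac)
  qed
  also have "\<dots> \<le> K * real n * (\<Sum>k. (a k)\<^sup>2)"
    using a d_ln(2) by (simp add: sum_distrib_left[symmetric] mult_left_mono sum_le_suminf)
  finally show ?thesis
    by (simp add: set_integral_Qn_square)
qed

end

lemma abs_set_integral_Qn_le_Bn:
  assumes "2 \<le> n" "i < n"
  shows "\<bar>LBINT x:{0..real i / real n}. Qn \<phi> n d a x\<bar> \<le> Bn \<phi> n d a"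
proof -
  have le_Bn: "\<bar>LBINT x:{0..real j / real n}. Qn \<phi> n d a x\<bar> \<le> Bn \<phi> n d a"
    if "1 \<le> j" "j < n" for j
    unfolding Bn_def using that by (intro Max_ge) auto
  show ?thesis
  proof (cases "i = 0")
    case True
    have "0 \<le> Bn \<phi> n d a"
      using le_Bn[of 1] assms(1) abs_ge_zero order_trans by fastforce
    then show ?thesis
      using True by (simp add: set_integral_lborel_singleton)
  next
    case False
    then show ?thesis
      using le_Bn assms by simp
  qed
qed

lemma square_mult_ln_le_if_abs_le:
  fixes y c :: real
  assumes "1 \<le> k" "0 \<le> c" "\<bar>y\<bar> \<le> c * (sqrt (real k) / (ln (real k + 1))\<^sup>2)"
  shows "(y * ln (real k))\<^sup>2 \<le> 9 / 4 * c\<^sup>2 * real k"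
proof -
  have "ln 2 \<le> ln (real k + 1)"
    using assms(1) by simp
  then have "2 / 3 \<le> ln (real k + 1)"
    using ln2_ge_two_thirds by linarith
  have "0 \<le> ln (real k)" "ln (real k) \<le> ln (real k + 1)"
    using assms(1) by simp_all
  then have "\<bar>y * ln (real k)\<bar> = \<bar>y\<bar> * ln (real k)"
    by (simp add: abs_mult)
  also have "\<dots> \<le> c * (sqrt (real k) / (ln (real k + 1))\<^sup>2) * ln (real k + 1)"
    using assms \<open>0 \<le> ln (real k)\<close> \<open>ln (real k) \<le> ln (real k + 1)\<close> by (intro mult_mono) auto
  also have "\<dots> = c * sqrt (real k) / ln (real k + 1)"
    using \<open>2 / 3 \<le> ln (real k + 1)\<close> by (simp add: power2_eq_square)
  also have "\<dots> \<le> c * sqrt (real k) / (2 / 3)"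
    using \<open>2 / 3 \<le> ln (real k + 1)\<close> assms(1,2) by (intro divide_left_mono) auto
  finally have "(y * ln (real k))\<^sup>2 \<le> (3 / 2 * c * sqrt (real k))\<^sup>2"
    using assms(2) by (intro power2_le_iff_abs_le[THEN iffD2]) (auto simp: field_simps)
  also have "\<dots> = 9 / 4 * c\<^sup>2 * real k"
    by (simp add: power_mult_distrib power_divide)
  finally show ?thesis .
qed

lemma square_mult_ln_le_linear:
  fixes d :: "nat \<Rightarrow> real"
  assumes "(\<lambda>n. d n) \<in> O(\<lambda>n. sqrt (real n) / (ln (real n + 1))\<^sup>2)"
  obtains K where "0 \<le> K" "\<And>k. (d k * ln (real k))\<^sup>2 \<le> K * real k"
proof -
  obtain c where "c > 0"
    and "\<forall>\<^sub>F n in sequentially. \<bar>d n\<bar> \<le> c * \<bar>sqrt (real n) / (ln (real n + 1))\<^sup>2\<bar>"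
    using assms by (auto elim: landau_o.bigE)
  then obtain N where N: "\<And>k. N \<le> k \<Longrightarrow> \<bar>d k\<bar> \<le> c * (sqrt (real k) / (ln (real k + 1))\<^sup>2)"
    unfolding eventually_sequentially by auto
  define K0 where "K0 = (\<Sum>k<N. (d k * ln (real k))\<^sup>2)"
  have "0 \<le> K0" by (simp add: K0_def sum_nonneg)
  have "(d k * ln (real k))\<^sup>2 \<le> (K0 + 9 / 4 * c\<^sup>2) * real k" if "1 \<le> k" for k
  proof (cases "k < N")
    case True
    then have "(d k * ln (real k))\<^sup>2 \<le> K0"
      unfolding K0_def by (intro member_le_sum) auto
    also have "\<dots> \<le> K0 * real k"
      using \<open>0 \<le> K0\<close> that by (simp add: mult_le_cancel_left1)
    also have "\<dots> \<le> (K0 + 9 / 4 * c\<^sup>2) * real k"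
      by (intro mult_right_mono) auto
    finally show ?thesis .
  next
    case False
    then have "(d k * ln (real k))\<^sup>2 \<le> 9 / 4 * c\<^sup>2 * real k"
      using that \<open>c > 0\<close> N by (intro square_mult_ln_le_if_abs_le) auto
    also have "\<dots> \<le> (K0 + 9 / 4 * c\<^sup>2) * real k"
      using \<open>0 \<le> K0\<close> by (intro mult_right_mono) auto
    finally show ?thesis .
  qed
  then have "(d k * ln (real k))\<^sup>2 \<le> (K0 + 9 / 4 * c\<^sup>2) * real k" for k
    by (cases "k = 0") auto
  moreover have "0 \<le> K0 + 9 / 4 * c\<^sup>2"
    using \<open>0 \<le> K0\<close> by simp
  ultimately show thesis
    using that by blast
qed

lemma bounded_pairings:
  fixes \<phi> :: "nat \<Rightarrow> real \<Rightarrow> real" and d a :: "nat \<Rightarrow> real" and f :: "real \<Rightarrow> real"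
  assumes ons: "orthonormal_system \<phi>" and f: "BV01 f"
    and d_ln: "\<And>k. (d k * ln (real k))\<^sup>2 \<le> K * real k" "0 \<le> K"
    and a: "summable (\<lambda>k. (a k)\<^sup>2)"
    and Bn_bounded: "(\<lambda>n. Bn \<phi> n d a) \<in> O(\<lambda>_. 1)"
  shows "(\<lambda>n. \<Sum>k<n. a k * (d k * ln (real k) * coef \<phi> f k)) \<in> O(\<lambda>_. 1)"
proof -
  obtain C where "\<forall>\<^sub>F n in sequentially. \<bar>Bn \<phi> n d a\<bar> \<le> C"
    using Bn_bounded by (auto elim: landau_o.bigE)
  then have "\<forall>\<^sub>F n in sequentially. 2 \<le> n \<and> \<bar>Bn \<phi> n d a\<bar> \<le> C"
    by (intro eventually_conj) (auto simp: eventually_sequentially)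
  then have "\<forall>\<^sub>F n in sequentially. \<bar>\<Sum>k<Suc n. a k * (d k * ln (real k) * coef \<phi> f k)\<bar>
      \<le> (\<bar>f 1\<bar> + variation f 1) * (C + (1 + K * (\<Sum>k. (a k)\<^sup>2)) / 2)"
  proof eventually_elim
    case (elim n)
    have "(LBINT x:{0..1}. (Qn \<phi> n d a x)\<^sup>2) / real n \<le> K * (\<Sum>k. (a k)\<^sup>2)"
      using set_integral_Qn_square_le[OF ons d_ln a, of n] elim by (simp add: divide_le_eq mult_ac)
    have "\<bar>\<Sum>k<Suc n. a k * (d k * ln (real k) * coef \<phi> f k)\<bar> = \<bar>LBINT x:{0..1}. f x * Qn \<phi> n d a x\<bar>"
      unfolding sum_pairing_eq_set_integral_Qn[OF ons f] ..
    also have "\<dots> \<le> (\<bar>f 1\<bar> + variation f 1)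
        * (Bn \<phi> n d a + (1 + (LBINT x:{0..1}. (Qn \<phi> n d a x)\<^sup>2) / real n) / 2)"
      using elim by (intro abs_set_integral_BV_le[OF f set_integrable_Qn[OF ons] set_integrable_Qn_square[OF ons]]
          abs_set_integral_Qn_le_Bn) auto
    also have "\<dots> \<le> (\<bar>f 1\<bar> + variation f 1) * (C + (1 + K * (\<Sum>k. (a k)\<^sup>2)) / 2)"
    proof (rule mult_left_mono)
      show "0 \<le> \<bar>f 1\<bar> + variation f 1"
        using variation_nonneg_0[OF f] variation_mono[OF f, of 0 1] by simp
      show "Bn \<phi> n d a + (1 + (LBINT x:{0..1}. (Qn \<phi> n d a x)\<^sup>2) / real n) / 2
          \<le> C + (1 + K * (\<Sum>k. (a k)\<^sup>2)) / 2"
        using abs_le_D1[OF conjunct2[OF elim]] \<open>(LBINT x:{0..1}. (Qn \<phi> n d a x)\<^sup>2) / real n \<le> K * (\<Sum>k. (a k)\<^sup>2)\<close>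
        by (intro add_mono divide_right_mono) auto
    qed
    finally show ?case .
  qed
  then have "\<forall>\<^sub>F n in sequentially. norm (\<Sum>k<n. a k * (d k * ln (real k) * coef \<phi> f k))
      \<le> (\<bar>f 1\<bar> + variation f 1) * (C + (1 + K * (\<Sum>k. (a k)\<^sup>2)) / 2) * norm (1::real)"
    by (subst eventually_sequentially_Suc[symmetric]) simp
  then show ?thesis
    by (rule bigoI)
qed

theorem corollary1:
  fixes \<phi> :: "nat \<Rightarrow> real \<Rightarrow> real" and d :: "nat \<Rightarrow> real" and f :: "real \<Rightarrow> real"
  assumes ons: "orthonormal_system \<phi>"
    and dO: "(\<lambda>n. d n) \<in> O(\<lambda>n. sqrt (real n) / (ln (real n + 1))\<^sup>2)"
    and B: "\<forall>a::nat \<Rightarrow> real. summable (\<lambda>n. (a n)\<^sup>2) \<longrightarrow>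
              (\<lambda>n. Bn \<phi> n d a) \<in> O(\<lambda>n. 1)"
    and f: "BV01 f"
  shows "AE x in lborel. x \<in> {0..1} \<longrightarrow>
           summable (\<lambda>k. d (Suc k) * coef \<phi> f (Suc k) * \<phi> (Suc k) x)"
proof -
  obtain K where "0 \<le> K" "\<And>k. (d k * ln (real k))\<^sup>2 \<le> K * real k"
    using square_mult_ln_le_linear[OF dO] by blast
  then have "summable (\<lambda>k. (d k * ln (real k) * coef \<phi> f k)\<^sup>2)"
    using B by (intro Landau_square_summable[where b = "\<lambda>k. d k * ln (real k) * coef \<phi> f k"]
        bounded_pairings[OF ons f]) auto
  then have "summable (\<lambda>k. (d (Suc k) * coef \<phi> f (Suc k))\<^sup>2 * (ln (real k + 1))\<^sup>2)"
    by (subst (asm) summable_Suc_iff[symmetric]) (simp add: power_mult_distrib mult_ac add.commute)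
  interpret shifted: orthonormal_seq lborel "\<lambda>k x. indicator {0..1} x * \<phi> (Suc k) x"
    by (rule orthonormal_system_orthonormal_seq[OF ons])
  have "AE x in lborel.
      summable (\<lambda>k. d (Suc k) * coef \<phi> f (Suc k) * (indicator {0..1} x * \<phi> (Suc k) x))"
    by (rule shifted.Menshov_Rademacher) fact
  then show ?thesis
    by eventually_elim auto
qed

end
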